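(* Let $T$ be a nonabelian finite simple group and let $A,B,C$ be pairwise distinct proper subgroups of $T$ forming a strong multiple factorisation, i.e. $T=A(B\cap C)=B(C\cap A)=C(A\cap B)$. Let $M=T^3$, $G=T\wr C_3=M\rtimes C_3$, where $C_3$ is generated by the cyclic coordinate shift $(t_1,t_2,t_3)\mapsto(t_2,t_3,t_1)$, and let $K_1=A\times B\times C$, $K_2=B\times C\times A$, $K_3=C\times A\times B$. Then $K_1\cap K_2\cap K_3=(A\cap B\cap C)^3$ is normalised by $C_3$; $G$ acts transitively on the coset space $\Omega$ of $H=(K_1\cap K_2\cap K_3)\rtimes C_3$, with $M$ a transitive minimal normal subgroup; and for $\omega=H$: (a) $\{K_1,K_2,K_3\}$ is a Cartesian system of subgroups in $M$ with respect to $\omega$ which is not $M$-normal and has $|\mathcal F_i|=3$; (b) $\{(A\cap B\cap C)\times T\times T,\ T\times(A\cap B\cap C)\times T,\ T\times T\times(A\cap B\cap C)\}$ is also a Cartesian system of subgroups in $M$ with respect to $\omega$, and it is $M$-normal.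
   Context: For $G$ innately transitive on $\Omega$ (i.e. with a transitive minimal normal subgroup, a plinth) with plinth $M$ and $\omega\in\Omega$, a Cartesian system of subgroups in $M$ with respect to $\omega$ is a $G_\omega$-conjugation-invariant set $\{K_1,\ldots,K_\ell\}$ of subgroups of $M$ with $\bigcap_i K_i=M_\omega$ and $K_i\bigl(\bigcap_{j\ne i}K_j\bigr)=M$ for all $i$. It is $M$-normal if there are normal subgroups $M_1,\ldots,M_\ell$ of $M$ with $M=M_1\times\cdots\times M_\ell$ and $K_i=(M_i\cap M_\omega)\times\prod_{j\ne i}M_j$ for all $i$. For $M=T_1\times\cdots\times T_k$ with simple factors $T_i$ and projections $\sigma_i:M\to T_i$, $\mathcal F_i=\{\sigma_i(K_j):\sigma_i(K_j)\ne T_i\}$. *)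

theory Defs
  imports "HOL-Algebra.Algebra"
begin

text \<open>Elements of M = T^3 are triples (t1,t2,t3) (i.e. t1 x (t2 x t3) in HOL);
  elements of G are pairs (m, i) with m in T^3 and i in {0,1,2} standing for sigma^i,
  where sigma is the cyclic coordinate shift.\<close>

definition shift3 :: "'a \<times> 'a \<times> 'a \<Rightarrow> 'a \<times> 'a \<times> 'a" where
  "shift3 m = (case m of (t1, t2, t3) \<Rightarrow> (t2, t3, t1))"

definition mult3 :: "('a, 'b) monoid_scheme \<Rightarrow> 'a \<times> 'a \<times> 'a \<Rightarrow> 'a \<times> 'a \<times> 'a \<Rightarrow> 'a \<times> 'a \<times> 'a" where
  "mult3 T m n = (case m of (a, b, c) \<Rightarrow> case n of (a', b', c') \<Rightarrow>
      (a \<otimes>\<^bsub>T\<^esub> a', b \<otimes>\<^bsub>T\<^esub> b', c \<otimes>\<^bsub>T\<^esub> c'))"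

definition wr3 :: "('a, 'b) monoid_scheme \<Rightarrow> (('a \<times> 'a \<times> 'a) \<times> nat) monoid" where
  "wr3 T = \<lparr> carrier = (carrier T \<times> carrier T \<times> carrier T) \<times> {0, 1, 2},
      monoid.mult = (\<lambda>(m, i) (n, j). (mult3 T m ((shift3 ^^ i) n), (i + j) mod 3)),
      one = ((\<one>\<^bsub>T\<^esub>, \<one>\<^bsub>T\<^esub>, \<one>\<^bsub>T\<^esub>), 0) \<rparr>"

definition emb3 :: "('a \<times> 'a \<times> 'a) set \<Rightarrow> (('a \<times> 'a \<times> 'a) \<times> nat) set" where
  "emb3 Z = (\<lambda>m. (m, 0)) ` Z"

definition C3 :: "('a, 'b) monoid_scheme \<Rightarrow> (('a \<times> 'a \<times> 'a) \<times> nat) set" where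
  "C3 T = {((\<one>\<^bsub>T\<^esub>, \<one>\<^bsub>T\<^esub>, \<one>\<^bsub>T\<^esub>), i) | i. i < 3}"

definition proj3 :: "nat \<Rightarrow> 'a \<times> 'a \<times> 'a \<Rightarrow> 'a" where
  "proj3 i m = (case m of (a, b, c) \<Rightarrow> if i = 0 then a else if i = 1 then b else c)"

definition Fset :: "('a, 'b) monoid_scheme \<Rightarrow> (nat \<Rightarrow> ('a \<times> 'a \<times> 'a) set) \<Rightarrow> nat \<Rightarrow> nat \<Rightarrow> 'a set set" where
  "Fset T K l i = {proj3 i ` K j | j. j < l \<and> proj3 i ` K j \<noteq> carrier T}"

definition minimal_normal :: "('g, 'b) monoid_scheme \<Rightarrow> 'g set \<Rightarrow> bool" where
  "minimal_normal G N \<longleftrightarrow> N \<lhd> G \<and> N \<noteq> {\<one>\<^bsub>G\<^esub>} \<and>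
     (\<forall>L. L \<lhd> G \<and> L \<subseteq> N \<longrightarrow> L = {\<one>\<^bsub>G\<^esub>} \<or> L = N)"

text \<open>Cartesian system of subgroups K_0,...,K_(l-1) of M (a subgroup of G), where
  Gw is the point stabiliser G_omega and Mw = M_omega.\<close>

definition cartesian_system ::
  "('g, 'b) monoid_scheme \<Rightarrow> 'g set \<Rightarrow> 'g set \<Rightarrow> 'g set \<Rightarrow> nat \<Rightarrow> (nat \<Rightarrow> 'g set) \<Rightarrow> bool" where
  "cartesian_system G M Gw Mw l K \<longleftrightarrow>
     (\<forall>i<l. subgroup (K i) G \<and> K i \<subseteq> M) \<and>
     (\<forall>g\<in>Gw. (\<lambda>Z. (g <#\<^bsub>G\<^esub> Z) #>\<^bsub>G\<^esub> inv\<^bsub>G\<^esub> g) ` (K ` {..<l}) = K ` {..<l}) \<and>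
     M \<inter> (\<Inter>i\<in>{..<l}. K i) = Mw \<and>
     (\<forall>i<l. K i <#>\<^bsub>G\<^esub> (M \<inter> (\<Inter>j\<in>{..<l} - {i}. K j)) = M)"

text \<open>M-normal: M is the internal direct product of normal subgroups M_0,...,M_(l-1) and
  K_i = (M_i \<inter> M_omega) x prod_(j \<noteq> i) M_j (internal products, realised as generated subgroups).\<close>

definition M_normal ::
  "('g, 'b) monoid_scheme \<Rightarrow> 'g set \<Rightarrow> 'g set \<Rightarrow> nat \<Rightarrow> (nat \<Rightarrow> 'g set) \<Rightarrow> bool" where
  "M_normal G M Mw l K \<longleftrightarrow> (\<exists>Ms :: nat \<Rightarrow> 'g set.
     (\<forall>i<l. Ms i \<lhd> G\<lparr>carrier := M\<rparr>) \<and>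
     generate G (\<Union>i\<in>{..<l}. Ms i) = M \<and>
     (\<forall>i<l. Ms i \<inter> generate G (\<Union>j\<in>{..<l} - {i}. Ms j) = {\<one>\<^bsub>G\<^esub>}) \<and>
     (\<forall>i<l. K i = (Ms i \<inter> Mw) <#>\<^bsub>G\<^esub> generate G (\<Union>j\<in>{..<l} - {i}. Ms j)))"


definition Mbase :: "('a, 'b) monoid_scheme \<Rightarrow> (('a \<times> 'a \<times> 'a) \<times> nat) set" where
  "Mbase T = emb3 (carrier T \<times> carrier T \<times> carrier T)"

text \<open>K_1 = A x B x C, K_2 = B x C x A, K_3 = C x A x B (indexed 0,1,2), as subsets of T^3.\<close>

definition Ktrip :: "'a set \<Rightarrow> 'a set \<Rightarrow> 'a set \<Rightarrow> nat \<Rightarrow> ('a \<times> 'a \<times> 'a) set" where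
  "Ktrip A B C i = (if i = 0 then A \<times> B \<times> C else if i = 1 then B \<times> C \<times> A else C \<times> A \<times> B)"

definition Ltrip :: "('a, 'b) monoid_scheme \<Rightarrow> 'a set \<Rightarrow> nat \<Rightarrow> ('a \<times> 'a \<times> 'a) set" where
  "Ltrip T D i = (if i = 0 then D \<times> carrier T \<times> carrier T
                  else if i = 1 then carrier T \<times> D \<times> carrier T
                  else carrier T \<times> carrier T \<times> D)"

definition Hsub :: "('a, 'b) monoid_scheme \<Rightarrow> 'a set \<Rightarrow> 'a set \<Rightarrow> 'a set \<Rightarrow> (('a \<times> 'a \<times> 'a) \<times> nat) set" where
  "Hsub T A B C = emb3 (Ktrip A B C 0 \<inter> Ktrip A B C 1 \<inter> Ktrip A B C 2) <#>\<^bsub>wr3 T\<^esub> C3 T"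

definition coset_space :: "('g, 'b) monoid_scheme \<Rightarrow> 'g set \<Rightarrow> 'g set set" where
  "coset_space G H = {g <#\<^bsub>G\<^esub> H | g. g \<in> carrier G}"

definition stab :: "('g, 'b) monoid_scheme \<Rightarrow> 'g set \<Rightarrow> 'g set" where
  "stab G w = {g \<in> carrier G. g <#\<^bsub>G\<^esub> w = w}"

definition transitive_on :: "('g, 'b) monoid_scheme \<Rightarrow> 'g set \<Rightarrow> 'g set set \<Rightarrow> bool" where
  "transitive_on G N \<Omega> \<longleftrightarrow> (\<forall>x\<in>\<Omega>. \<forall>y\<in>\<Omega>. \<exists>g\<in>N. g <#\<^bsub>G\<^esub> x = y)"

end

theory Submission
  imports Defs
begin

text \<open>Write \<open>D = A \<inter> B \<inter> C\<close> and \<open>\<sigma>\<close> for the coordinate shift. The point stabiliser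
  \<open>H = D\<^sup>3 \<rtimes> \<langle>\<sigma>\<rangle>\<close> permutes \<open>K\<^sub>1, K\<^sub>2, K\<^sub>3\<close>: conjugation by \<open>\<sigma>\<close> rotates them and \<open>D\<^sup>3\<close>
  normalises each of them. Intersecting two of the \<open>K\<^sub>i\<close> gives a product of pairwise intersections
  of \<open>A, B, C\<close>, so the strong factorisation \<open>T = A(B \<inter> C) = B(C \<inter> A) = C(A \<inter> B)\<close> yields
  \<open>K\<^sub>i (K\<^sub>j \<inter> K\<^sub>k) = M\<close> coordinatewise. If the system were \<open>M\<close>-normal with factors \<open>M\<^sub>j\<close>, each
  \<open>M\<^sub>j\<close> would lie in some \<open>K\<^sub>i\<close>, a product of proper subgroups of \<open>T\<close>; its coordinate projections
  are normal subgroups of the simple group \<open>T\<close>, hence trivial, so \<open>M = 1\<close>. The system of (b)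
  is the cyclic system of \<open>(D, T, T)\<close> with two indices swapped, and it is \<open>M\<close>-normal with
  respect to the three simple direct factors of \<open>M\<close>. Minimality of \<open>M\<close> uses that \<open>T\<close> is
  nonabelian: a normal subgroup containing an element with nontrivial \<open>k\<close>-th coordinate contains
  its commutators with the \<open>k\<close>-th factor, hence that whole factor.\<close>

section \<open>The wreath product\<close>

lemma shift3_simp [simp]: "shift3 (a, b, c) = (b, c, a)"
  by (simp add: shift3_def)

lemma shift3_funpow_2 [simp]: "(shift3 ^^ 2) (a, b, c) = (c, a, b)"
  by (simp add: numeral_2_eq_2)

lemma mult3_simp [simp]:
  "mult3 T (a, b, c) (a', b', c') = (a \<otimes>\<^bsub>T\<^esub> a', b \<otimes>\<^bsub>T\<^esub> b', c \<otimes>\<^bsub>T\<^esub> c')"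
  by (simp add: mult3_def)

(* The index 1 appears as Suc 0, the simp normal form of (1::nat) (One_nat_def). *)
lemma proj3_simps [simp]:
  "proj3 0 (a, b, c) = a" "proj3 (Suc 0) (a, b, c) = b" "proj3 2 (a, b, c) = c"
  by (simp_all add: proj3_def)

lemma less3_cases:
  assumes "(k::nat) < 3"
  obtains "k = 0" | "k = 1" | "k = 2"
  using assms by linarith

lemma wr3_carrier [simp]: "carrier (wr3 T) = (carrier T \<times> carrier T \<times> carrier T) \<times> {0, 1, 2}"
  by (simp add: wr3_def)

lemma wr3_mult [simp]:
  "(m, i) \<otimes>\<^bsub>wr3 T\<^esub> (n, j) = (mult3 T m ((shift3 ^^ i) n), (i + j) mod 3)"
  by (simp add: wr3_def)

lemma wr3_one [simp]: "\<one>\<^bsub>wr3 T\<^esub> = ((\<one>\<^bsub>T\<^esub>, \<one>\<^bsub>T\<^esub>, \<one>\<^bsub>T\<^esub>), 0)"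
  by (simp add: wr3_def)

lemma wr3_elem_cases:
  assumes "x \<in> carrier (wr3 T)"
  obtains a b c i where "x = ((a, b, c), i)" "i = 0 \<or> i = 1 \<or> i = 2"
    "a \<in> carrier T" "b \<in> carrier T" "c \<in> carrier T"
  using assms by (cases x) auto

context group
begin

lemma wr3_group: "group (wr3 G)"
proof (rule groupI)
  fix x y z
  assume "x \<in> carrier (wr3 G)" "y \<in> carrier (wr3 G)" "z \<in> carrier (wr3 G)"
  then show "x \<otimes>\<^bsub>wr3 G\<^esub> y \<otimes>\<^bsub>wr3 G\<^esub> z = x \<otimes>\<^bsub>wr3 G\<^esub> (y \<otimes>\<^bsub>wr3 G\<^esub> z)"
    by (elim wr3_elem_cases) (auto simp: m_assoc)
next
  fix x assume "x \<in> carrier (wr3 G)"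
  then show "\<exists>y\<in>carrier (wr3 G). y \<otimes>\<^bsub>wr3 G\<^esub> x = \<one>\<^bsub>wr3 G\<^esub>"
  proof (elim wr3_elem_cases)
    fix a b c i
    assume x: "x = ((a, b, c), i)" "i = 0 \<or> i = 1 \<or> i = 2"
      and abc: "a \<in> carrier G" "b \<in> carrier G" "c \<in> carrier G"
    show ?thesis
      using x(2) abc unfolding x
      by (elim disjE; intro bexI[of _ "((shift3 ^^ ((3 - i) mod 3)) (inv a, inv b, inv c), (3 - i) mod 3)"])
        auto
  qed
qed (fastforce elim: wr3_elem_cases)+

lemma wr3_inv_simps [simp]:
  assumes "a \<in> carrier G" "b \<in> carrier G" "c \<in> carrier G"
  shows "inv\<^bsub>wr3 G\<^esub> ((a, b, c), 0) = ((inv a, inv b, inv c), 0)"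
    and "inv\<^bsub>wr3 G\<^esub> ((a, b, c), Suc 0) = ((inv c, inv a, inv b), 2)"
    and "inv\<^bsub>wr3 G\<^esub> ((a, b, c), 2) = ((inv b, inv c, inv a), 1)"
  using assms by (auto intro: group.inv_equality[OF wr3_group])

lemma wr3_conj_rotation:
  assumes "m \<in> carrier G \<times> carrier G \<times> carrier G" "i < 3"
  shows "((\<one>, \<one>, \<one>), i) \<otimes>\<^bsub>wr3 G\<^esub> (m, 0) \<otimes>\<^bsub>wr3 G\<^esub> inv\<^bsub>wr3 G\<^esub> ((\<one>, \<one>, \<one>), i)
    = ((shift3 ^^ i) m, 0)"
  using assms by (cases m) (elim less3_cases; simp)

end

section \<open>Conjugation, cosets and normal subgroups\<close>

abbreviation conj_set :: "('g, 'b) monoid_scheme \<Rightarrow> 'g \<Rightarrow> 'g set \<Rightarrow> 'g set" where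
  "conj_set G g Z \<equiv> (g <#\<^bsub>G\<^esub> Z) #>\<^bsub>G\<^esub> inv\<^bsub>G\<^esub> g"

context group
begin

lemma conj_set_eq_image: "conj_set G g Z = (\<lambda>z. g \<otimes> z \<otimes> inv g) ` Z"
  by (auto simp: l_coset_def r_coset_def)

lemma conj_set_mult:
  assumes "g \<in> carrier G" "h \<in> carrier G" "Z \<subseteq> carrier G"
  shows "conj_set G (g \<otimes> h) Z = conj_set G g (conj_set G h Z)"
  unfolding conj_set_eq_image image_image
  using assms by (intro image_cong) (auto simp: inv_mult_group m_assoc subsetD)

lemma lcos_subgroup_self:
  assumes "subgroup H G" "h \<in> H"
  shows "h <# H = H"
proof -
  have "h \<in> \<one> <# H"
    using assms by (simp add: lcos_mult_one subgroup.subset)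
  then show ?thesis
    using assms by (metis l_repr_independence lcos_mult_one one_closed subgroup.subset)
qed

lemma conj_set_subgroup_self:
  assumes "subgroup H G" "h \<in> H"
  shows "conj_set G h H = H"
  using assms by (simp add: lcos_subgroup_self subgroup.rcos_const subgroup.m_inv_closed is_group)

lemma stab_subgroup:
  assumes "subgroup H G"
  shows "stab G H = H"
  using assms lcos_subgroup_self lcos_self[OF _ assms]
  by (auto simp: stab_def subgroup.mem_carrier)

lemma transitive_on_coset_space:
  assumes N: "subgroup N G" and H: "subgroup H G" and NH: "carrier G \<subseteq> N <#> H"
  shows "transitive_on G N (coset_space G H)"
proof -
  have H_carrier: "H \<subseteq> carrier G"
    using H by (rule subgroup.subset)
  have coset_rep: "\<exists>n\<in>N. g <# H = n <# H" if g: "g \<in> carrier G" for g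
  proof -
    obtain n h where nh: "n \<in> N" "h \<in> H" "g = n \<otimes> h"
      using NH g unfolding set_mult_def by blast
    then have "g <# H = n <# (h <# H)"
      using subgroup.mem_carrier[OF N] subgroup.mem_carrier[OF H] H_carrier
      by (simp add: lcos_m_assoc)
    also have "\<dots> = n <# H"
      using H nh(2) by (simp add: lcos_subgroup_self)
    finally show ?thesis
      using nh(1) by blast
  qed
  have "\<exists>n\<in>N. n <# (n1 <# H) = n2 <# H" if "n1 \<in> N" "n2 \<in> N" for n1 n2
  proof
    have "n1 \<in> carrier G" "n2 \<in> carrier G"
      using subgroup.mem_carrier[OF N] that by auto
    then show "(n2 \<otimes> inv n1) <# (n1 <# H) = n2 <# H"
      using H_carrier by (simp add: lcos_m_assoc m_assoc)
    show "n2 \<otimes> inv n1 \<in> N"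
      using that N by (simp add: subgroup.m_closed subgroup.m_inv_closed)
  qed
  then show ?thesis
    unfolding transitive_on_def coset_space_def
    using coset_rep by (smt (verit) mem_Collect_eq)
qed

lemma subgroup_set_mult_carrier: "subgroup H G \<Longrightarrow> H <#> carrier G = carrier G"
  using subgroup.one_closed subgroup.subset
  by (fastforce simp: set_mult_def intro: bexI[of _ \<one>])

lemma common_kernel_normal:
  assumes hom: "\<And>k. k \<in> I \<Longrightarrow> group_hom G H (f k)"
  shows "{x \<in> carrier G. \<forall>k\<in>I. f k x = \<one>\<^bsub>H\<^esub>} \<lhd> G"
proof -
  have kernel_closed:
    "f k x = \<one>\<^bsub>H\<^esub> \<Longrightarrow> f k (inv x) = \<one>\<^bsub>H\<^esub>"
    "f k x = \<one>\<^bsub>H\<^esub> \<Longrightarrow> f k y = \<one>\<^bsub>H\<^esub> \<Longrightarrow> f k (x \<otimes> y) = \<one>\<^bsub>H\<^esub>"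
    "f k y = \<one>\<^bsub>H\<^esub> \<Longrightarrow> f k (x \<otimes> y \<otimes> inv x) = \<one>\<^bsub>H\<^esub>"
    if "k \<in> I" "x \<in> carrier G" "y \<in> carrier G" for k x y
  proof -
    interpret group_hom G H "f k"
      using hom that(1) .
    show "f k x = \<one>\<^bsub>H\<^esub> \<Longrightarrow> f k (inv x) = \<one>\<^bsub>H\<^esub>"
      using that by (simp add: hom_inv)
    show "f k x = \<one>\<^bsub>H\<^esub> \<Longrightarrow> f k y = \<one>\<^bsub>H\<^esub> \<Longrightarrow> f k (x \<otimes> y) = \<one>\<^bsub>H\<^esub>"
      using that by (simp add: hom_mult)
    show "f k y = \<one>\<^bsub>H\<^esub> \<Longrightarrow> f k (x \<otimes> y \<otimes> inv x) = \<one>\<^bsub>H\<^esub>"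
      using that by (simp add: hom_mult hom_inv)
  qed
  have "\<one> \<in> {x \<in> carrier G. \<forall>k\<in>I. f k x = \<one>\<^bsub>H\<^esub>}"
    using hom group_hom.hom_one by fastforce
  then show ?thesis
    unfolding normal_inv_iff
    by (intro conjI subgroupI ballI) (auto simp: kernel_closed)
qed

lemma M_normal_imp_factors_subset:
  assumes M: "subgroup M G" and one: "\<one> \<in> Mw" and "M_normal G M Mw l K"
  obtains Ms where "\<And>i. i < l \<Longrightarrow> Ms i \<lhd> G\<lparr>carrier := M\<rparr>"
    "generate G (\<Union>i\<in>{..<l}. Ms i) = M" "\<And>i j. i < l \<Longrightarrow> j < l \<Longrightarrow> j \<noteq> i \<Longrightarrow> Ms j \<subseteq> K i"
proof -
  obtain Ms where normal: "\<And>i. i < l \<Longrightarrow> Ms i \<lhd> G\<lparr>carrier := M\<rparr>"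
    and gen: "generate G (\<Union>i\<in>{..<l}. Ms i) = M"
    and K: "\<And>i. i < l \<Longrightarrow> K i = (Ms i \<inter> Mw) <#> generate G (\<Union>j\<in>{..<l} - {i}. Ms j)"
    using assms(3) unfolding M_normal_def by blast
  have Ms_subgroup: "subgroup (Ms i) (G\<lparr>carrier := M\<rparr>)" if "i < l" for i
    using normal[OF that] by (rule normal_imp_subgroup)
  have "Ms j \<subseteq> K i" if ij: "i < l" "j < l" "j \<noteq> i" for i j
  proof
    fix x assume x: "x \<in> Ms j"
    have "x \<in> carrier G"
      using subgroup.subset[OF Ms_subgroup[OF ij(2)]] subgroup.subset[OF M] x by auto
    moreover have "\<one> \<in> Ms i \<inter> Mw"
      using subgroup.one_closed[OF Ms_subgroup[OF ij(1)]] one by simp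
    moreover have "x \<in> generate G (\<Union>j\<in>{..<l} - {i}. Ms j)"
      using x ij by (blast intro: generate.incl)
    ultimately have "\<one> \<otimes> x \<in> K i"
      unfolding K[OF ij(1)] set_mult_def by blast
    then show "x \<in> K i"
      using \<open>x \<in> carrier G\<close> by simp
  qed
  with normal gen show thesis
    by (rule that)
qed

end

context simple_group
begin

lemma exists_noncommuting:
  assumes nonab: "\<not> comm_group G" and y: "y \<in> carrier G" "y \<noteq> \<one>"
  obtains t where "t \<in> carrier G" "y \<otimes> t \<otimes> inv y \<noteq> t"
proof -
  let ?conj = "\<lambda>g. \<lambda>h\<in>carrier G. g \<otimes> h \<otimes> inv g"
  interpret conj: group_hom G "BijGroup (carrier G)" ?conj
    using action_by_conjugation by (simp add: group_action_def)
  have kernel_iff: "g \<in> kernel G (BijGroup (carrier G)) ?conj \<longleftrightarrow>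
      g \<in> carrier G \<and> (\<forall>h\<in>carrier G. g \<otimes> h \<otimes> inv g = h)" for g
    by (auto simp: kernel_def BijGroup_def restrict_def fun_eq_iff)
  have "kernel G (BijGroup (carrier G)) ?conj \<noteq> carrier G"
  proof
    assume "kernel G (BijGroup (carrier G)) ?conj = carrier G"
    then have "x \<otimes> h = h \<otimes> x" if "x \<in> carrier G" "h \<in> carrier G" for x h
      using that kernel_iff inv_solve_right'[of h "x \<otimes> h" x] by auto
    then show False
      using nonab group_comm_groupI by blast
  qed
  then have "kernel G (BijGroup (carrier G)) ?conj = {\<one>}"
    using no_real_normal_subgroup[OF conj.normal_kernel] by blast
  then show thesis
    using that y kernel_iff by blast
qed

end

lemma cartesian_system_reindex:
  assumes p: "bij_betw p {..<l} {..<l}" and K': "\<And>i. i < l \<Longrightarrow> K' i = K (p i)"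
    and cart: "cartesian_system G M Gw Mw l K"
  shows "cartesian_system G M Gw Mw l K'"
proof -
  have image: "K' ` S = K ` p ` S" if "S \<subseteq> {..<l}" for S
    using K' that by (auto simp: image_iff)
  have "p ` ({..<l} - {i}) = {..<l} - {p i}" if "i < l" for i
  proof -
    have "p ` ({..<l} - {i}) = p ` {..<l} - p ` {i}"
      using p that by (intro inj_on_image_set_diff) (auto simp: bij_betw_def)
    then show ?thesis
      using bij_betw_imp_surj_on[OF p] by simp
  qed
  then have complement: "(\<Inter>j\<in>{..<l} - {i}. K' j) = (\<Inter>j\<in>{..<l} - {p i}. K j)" if "i < l" for i
    using image[of "{..<l} - {i}"] that by simp
  have all: "K' ` {..<l} = K ` {..<l}"
    using image[of "{..<l}"] bij_betw_imp_surj_on[OF p] by simp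
  have p_less: "p i < l" if "i < l" for i
    using p that by (auto simp: bij_betw_def)
  show ?thesis
    unfolding cartesian_system_def
  proof (intro conjI allI impI ballI)
    fix i assume i: "i < l"
    show "subgroup (K' i) G" "K' i \<subseteq> M"
      using cart p_less[OF i] K'[OF i] by (simp_all add: cartesian_system_def)
    show "K' i <#>\<^bsub>G\<^esub> (M \<inter> (\<Inter>j\<in>{..<l} - {i}. K' j)) = M"
      using cart p_less[OF i] K'[OF i] complement[OF i] by (simp add: cartesian_system_def)
  next
    fix g assume "g \<in> Gw"
    then show "(\<lambda>Z. conj_set G g Z) ` K' ` {..<l} = K' ` {..<l}"
      using cart all by (simp add: cartesian_system_def)
  next
    show "M \<inter> (\<Inter>i\<in>{..<l}. K' i) = Mw"
      using cart all by (simp add: cartesian_system_def)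
  qed
qed

section \<open>The base group \<open>M = T\<^sup>3\<close>\<close>

abbreviation base_group :: "('a, 'b) monoid_scheme \<Rightarrow> (('a \<times> 'a \<times> 'a) \<times> nat) monoid" where
  "base_group T \<equiv> (wr3 T)\<lparr>carrier := Mbase T\<rparr>"

definition Mprod :: "('a, 'b) monoid_scheme \<Rightarrow> nat set \<Rightarrow> (('a \<times> 'a \<times> 'a) \<times> nat) set" where
  "Mprod T J = {x \<in> Mbase T. \<forall>k<3. k \<notin> J \<longrightarrow> proj3 k (fst x) = \<one>\<^bsub>T\<^esub>}"

definition coord3 :: "('a, 'b) monoid_scheme \<Rightarrow> nat \<Rightarrow> 'a \<Rightarrow> ('a \<times> 'a \<times> 'a) \<times> nat" where
  "coord3 T k t = ((if k = 0 then t else \<one>\<^bsub>T\<^esub>, if k = 1 then t else \<one>\<^bsub>T\<^esub>,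
      if k = 2 then t else \<one>\<^bsub>T\<^esub>), 0)"

lemma Mbase_mem_iff [simp]:
  "((a, b, c), i) \<in> Mbase T \<longleftrightarrow> a \<in> carrier T \<and> b \<in> carrier T \<and> c \<in> carrier T \<and> i = 0"
  by (auto simp: Mbase_def emb3_def)

lemma Mbase_cases:
  assumes "x \<in> Mbase T"
  obtains a b c where "x = ((a, b, c), 0)" "a \<in> carrier T" "b \<in> carrier T" "c \<in> carrier T"
  using assms by (auto simp: Mbase_def emb3_def)

lemma Mbase_subset_carrier: "Mbase T \<subseteq> carrier (wr3 T)"
  by (auto elim: Mbase_cases)

lemma proj3_mem_carrier: "x \<in> Mbase T \<Longrightarrow> proj3 k (fst x) \<in> carrier T"
  by (elim Mbase_cases) (simp add: proj3_def)

lemma Mbase_eqI: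
  assumes "x \<in> Mbase T" "y \<in> Mbase T" "\<And>k. k < 3 \<Longrightarrow> proj3 k (fst x) = proj3 k (fst y)"
  shows "x = y"
  using assms(1,2) assms(3)[of 0] assms(3)[of 1] assms(3)[of 2]
  by (elim Mbase_cases) simp

lemma proj3_coord3 [simp]: "k < 3 \<Longrightarrow> proj3 k (fst (coord3 T j t)) = (if k = j then t else \<one>\<^bsub>T\<^esub>)"
  by (auto simp: coord3_def proj3_def)

lemma proj3_shift3: "k < 3 \<Longrightarrow> proj3 k (shift3 m) = proj3 ((k + 1) mod 3) m"
  by (cases m) (elim less3_cases; simp add: proj3_def)

lemma emb3_mem_iff [simp]: "(m, i) \<in> emb3 S \<longleftrightarrow> m \<in> S \<and> i = 0"
  by (auto simp: emb3_def)

lemma Mprod_Int: "Mprod T J \<inter> Mprod T J' = Mprod T (J \<inter> J')"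
  by (auto simp: Mprod_def)

lemma Mprod_all: "Mprod T {..<3} = Mbase T"
  by (auto simp: Mprod_def)

context group
begin

lemma Mbase_subgroup: "subgroup (Mbase G) (wr3 G)"
proof (rule group.subgroupI[OF wr3_group Mbase_subset_carrier])
  have "((\<one>, \<one>, \<one>), 0) \<in> Mbase G"
    by simp
  then show "Mbase G \<noteq> {}"
    by blast
  fix x y assume "x \<in> Mbase G" "y \<in> Mbase G"
  then show "inv\<^bsub>wr3 G\<^esub> x \<in> Mbase G" "x \<otimes>\<^bsub>wr3 G\<^esub> y \<in> Mbase G"
    by (auto elim!: Mbase_cases)
qed

lemma Mbase_normal: "Mbase G \<lhd> wr3 G"
  unfolding group.normal_inv_iff[OF wr3_group]
proof (intro conjI Mbase_subgroup ballI)
  fix x h assume "x \<in> carrier (wr3 G)" "h \<in> Mbase G"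
  then show "x \<otimes>\<^bsub>wr3 G\<^esub> h \<otimes>\<^bsub>wr3 G\<^esub> inv\<^bsub>wr3 G\<^esub> x \<in> Mbase G"
    by (elim wr3_elem_cases Mbase_cases disjE) auto
qed

lemma group_base_group: "group (base_group G)"
  by (rule group.subgroup_imp_group[OF wr3_group Mbase_subgroup])

lemma proj3_mult_Mbase:
  "x \<in> Mbase G \<Longrightarrow> y \<in> Mbase G \<Longrightarrow> proj3 k (fst (x \<otimes>\<^bsub>wr3 G\<^esub> y)) = proj3 k (fst x) \<otimes> proj3 k (fst y)"
  by (elim Mbase_cases) (simp add: proj3_def)

lemma proj3_hom: "group_hom (base_group G) G (\<lambda>x. proj3 k (fst x))"
proof (rule group_hom.intro[OF group_base_group is_group])
  show "group_hom_axioms (base_group G) G (\<lambda>x. proj3 k (fst x))"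
    unfolding group_hom_axioms_def
    by (rule homI) (auto simp: proj3_mem_carrier proj3_def elim!: Mbase_cases)
qed

lemma coord3_mult: "coord3 G k a \<otimes>\<^bsub>wr3 G\<^esub> coord3 G k b = coord3 G k (a \<otimes> b)"
  by (simp add: coord3_def)

lemma coord3_one: "coord3 G k \<one> = \<one>\<^bsub>wr3 G\<^esub>"
  by (simp add: coord3_def)

lemma coord3_mem_Mprod: "t \<in> carrier G \<Longrightarrow> coord3 G k t \<in> Mprod G {k}"
  by (auto simp: Mprod_def coord3_def proj3_def)

lemma proj3_image_Mprod:
  assumes "k < 3"
  shows "(\<lambda>x. proj3 k (fst x)) ` Mprod G {k} = carrier G"
proof
  show "(\<lambda>x. proj3 k (fst x)) ` Mprod G {k} \<subseteq> carrier G"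
    using proj3_mem_carrier unfolding Mprod_def by blast
  show "carrier G \<subseteq> (\<lambda>x. proj3 k (fst x)) ` Mprod G {k}"
  proof
    fix t assume "t \<in> carrier G"
    then show "t \<in> (\<lambda>x. proj3 k (fst x)) ` Mprod G {k}"
      using assms by (intro rev_image_eqI[OF coord3_mem_Mprod]) auto
  qed
qed

lemma proj3_image_Mbase:
  assumes "k < 3"
  shows "(\<lambda>x. proj3 k (fst x)) ` Mbase G = carrier G"
proof
  show "(\<lambda>x. proj3 k (fst x)) ` Mbase G \<subseteq> carrier G"
    using proj3_mem_carrier by blast
  show "carrier G \<subseteq> (\<lambda>x. proj3 k (fst x)) ` Mbase G"
    using proj3_image_Mprod[OF assms] unfolding Mprod_def by blast
qed

lemma Mprod_singleton_eq_coord3: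
  assumes z: "z \<in> Mprod G {k}"
  shows "z = coord3 G k (proj3 k (fst z))"
proof (rule Mbase_eqI)
  show z_base: "z \<in> Mbase G"
    using z by (simp add: Mprod_def)
  show "coord3 G k (proj3 k (fst z)) \<in> Mbase G"
    using coord3_mem_Mprod[OF proj3_mem_carrier[OF z_base]] by (simp add: Mprod_def)
  show "proj3 j (fst z) = proj3 j (fst (coord3 G k (proj3 k (fst z))))" if "j < 3" for j
    using z that by (auto simp: Mprod_def)
qed

lemma Mbase_eq_coord3_product:
  assumes "x \<in> Mbase G"
  shows "x = coord3 G 0 (proj3 0 (fst x)) \<otimes>\<^bsub>wr3 G\<^esub> coord3 G 1 (proj3 1 (fst x))
    \<otimes>\<^bsub>wr3 G\<^esub> coord3 G 2 (proj3 2 (fst x))"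
  using assms by (elim Mbase_cases) (simp add: coord3_def)

lemma Mprod_empty: "Mprod G {} = {\<one>\<^bsub>wr3 G\<^esub>}"
proof (intro equalityI subsetI)
  fix x assume "x \<in> Mprod G {}"
  then have "x = \<one>\<^bsub>wr3 G\<^esub>"
    by (intro Mbase_eqI) (auto simp: Mprod_def proj3_def)
  then show "x \<in> {\<one>\<^bsub>wr3 G\<^esub>}"
    by simp
qed (auto simp: Mprod_def proj3_def)

lemma Mprod_normal: "Mprod G J \<lhd> base_group G"
proof -
  have "Mprod G J = {x \<in> carrier (base_group G). \<forall>k\<in>{..<3} - J. proj3 k (fst x) = \<one>}"
    by (auto simp: Mprod_def)
  then show ?thesis
    using group.common_kernel_normal[OF group_base_group proj3_hom] by simp
qed

lemma Mprod_subgroup: "subgroup (Mprod G J) (wr3 G)"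
  using group.incl_subgroup[OF wr3_group Mbase_subgroup normal_imp_subgroup[OF Mprod_normal]] .

lemma generate_Mprod:
  assumes J: "J \<subseteq> {..<3}"
  shows "generate (wr3 G) (\<Union>j\<in>J. Mprod G {j}) = Mprod G J"
proof
  show "generate (wr3 G) (\<Union>j\<in>J. Mprod G {j}) \<subseteq> Mprod G J"
    by (rule group.generate_subgroup_incl[OF wr3_group _ Mprod_subgroup]) (auto simp: Mprod_def)
next
  show "Mprod G J \<subseteq> generate (wr3 G) (\<Union>j\<in>J. Mprod G {j})"
  proof
    fix x assume x: "x \<in> Mprod G J"
    then have x_base: "x \<in> Mbase G"
      by (simp add: Mprod_def)
    have factor: "coord3 G k (proj3 k (fst x)) \<in> generate (wr3 G) (\<Union>j\<in>J. Mprod G {j})"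
      if "k < 3" for k
    proof (cases "k \<in> J")
      case True
      then show ?thesis
        using coord3_mem_Mprod[OF proj3_mem_carrier[OF x_base]] by (blast intro: generate.incl)
    next
      case False
      then have "coord3 G k (proj3 k (fst x)) = \<one>\<^bsub>wr3 G\<^esub>"
        using x that by (auto simp: Mprod_def coord3_def)
      then show ?thesis
        using generate.one[of "wr3 G" "\<Union>j\<in>J. Mprod G {j}"] by simp
    qed
    show "x \<in> generate (wr3 G) (\<Union>j\<in>J. Mprod G {j})"
      by (subst Mbase_eq_coord3_product[OF x_base]) (intro generate.eng factor; simp)
  qed
qed

lemma normal_Mbase_rotate:
  assumes L: "L \<lhd> wr3 G" and L_base: "L \<subseteq> Mbase G" and y: "y \<in> L"
  shows "(shift3 (fst y), 0) \<in> L"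
proof -
  have y_base: "fst y \<in> carrier G \<times> carrier G \<times> carrier G" "y = (fst y, 0)"
    using y L_base by (auto elim!: Mbase_cases)
  have "((\<one>, \<one>, \<one>), 1) \<otimes>\<^bsub>wr3 G\<^esub> y \<otimes>\<^bsub>wr3 G\<^esub> inv\<^bsub>wr3 G\<^esub> ((\<one>, \<one>, \<one>), 1) \<in> L"
    using L y by (intro normal.inv_op_closed2) auto
  then show ?thesis
    using wr3_conj_rotation[OF y_base(1), of 1] y_base(2) by simp
qed

lemma normal_Mbase_nontrivial_coordinate:
  assumes L: "L \<lhd> wr3 G" and L_base: "L \<subseteq> Mbase G"
    and x: "x \<in> L" and k: "k < 3" "proj3 k (fst x) \<noteq> \<one>" and j: "j < 3"
  shows "\<exists>y\<in>L. proj3 j (fst y) \<noteq> \<one>"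
proof -
  have rotate: "\<exists>y\<in>L. proj3 j (fst y) \<noteq> \<one>"
    if shifted: "\<exists>y\<in>L. proj3 ((j + 1) mod 3) (fst y) \<noteq> \<one>" and j: "j < 3" for j
  proof -
    obtain y where y: "y \<in> L" "proj3 ((j + 1) mod 3) (fst y) \<noteq> \<one>"
      using shifted by blast
    then have "(shift3 (fst y), 0) \<in> L" "proj3 j (fst (shift3 (fst y), 0)) \<noteq> \<one>"
      using normal_Mbase_rotate[OF L L_base] proj3_shift3[OF j, of "fst y"] by simp_all
    then show ?thesis
      by blast
  qed
  have "j = k \<or> (j + 1) mod 3 = k \<or> ((j + 1) mod 3 + 1) mod 3 = k"
    using j k(1) by (elim less3_cases) simp_all
  moreover have "(j + 1) mod 3 < 3"
    by simp
  ultimately show ?thesis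
    using x k(2) rotate[OF _ j] rotate[of "(j + 1) mod 3"] by blast
qed

lemma coord3_cancel:
  assumes "a \<in> carrier G" "x \<in> carrier (wr3 G)"
  shows "coord3 G i a \<otimes>\<^bsub>wr3 G\<^esub> (coord3 G i (inv a) \<otimes>\<^bsub>wr3 G\<^esub> x) = x"
proof -
  interpret W: group "wr3 G"
    by (rule wr3_group)
  have "coord3 G i a \<in> carrier (wr3 G)" "coord3 G i (inv a) \<in> carrier (wr3 G)"
    using assms(1) by (simp_all add: coord3_def)
  then have "coord3 G i a \<otimes>\<^bsub>wr3 G\<^esub> (coord3 G i (inv a) \<otimes>\<^bsub>wr3 G\<^esub> x)
      = coord3 G i (a \<otimes> inv a) \<otimes>\<^bsub>wr3 G\<^esub> x"
    using assms(2) by (simp only: W.m_assoc[symmetric] coord3_mult)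
  also have "\<dots> = x"
    using assms by (simp only: r_inv coord3_one W.l_one)
  finally show ?thesis .
qed

lemma coord3_inv_mult_mem_Mprod:
  assumes x: "x \<in> Mbase G" and i: "i < 3"
  shows "coord3 G i (inv (proj3 i (fst x))) \<otimes>\<^bsub>wr3 G\<^esub> x \<in> Mprod G ({..<3} - {i})"
proof -
  have a: "proj3 i (fst x) \<in> carrier G"
    using x by (rule proj3_mem_carrier)
  then have "coord3 G i (inv (proj3 i (fst x))) \<in> Mbase G"
    using coord3_mem_Mprod by (simp add: Mprod_def)
  then show ?thesis
    using x a i subgroup.m_closed[OF Mbase_subgroup] by (auto simp: Mprod_def proj3_mult_Mbase)
qed

lemma set_mult_Mprod_complement:
  assumes i: "i < 3"
  shows "{z \<in> Mprod G {i}. proj3 i (fst z) \<in> D} <#>\<^bsub>wr3 G\<^esub> Mprod G ({..<3} - {i})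
    = {x \<in> Mbase G. proj3 i (fst x) \<in> D}"
proof
  show "{z \<in> Mprod G {i}. proj3 i (fst z) \<in> D} <#>\<^bsub>wr3 G\<^esub> Mprod G ({..<3} - {i})
      \<subseteq> {x \<in> Mbase G. proj3 i (fst x) \<in> D}"
  proof
    fix x assume "x \<in> {z \<in> Mprod G {i}. proj3 i (fst z) \<in> D} <#>\<^bsub>wr3 G\<^esub> Mprod G ({..<3} - {i})"
    then obtain z y where z: "z \<in> Mprod G {i}" "proj3 i (fst z) \<in> D"
      and y: "y \<in> Mprod G ({..<3} - {i})" and x: "x = z \<otimes>\<^bsub>wr3 G\<^esub> y"
      unfolding set_mult_def by blast
    have base: "z \<in> Mbase G" "y \<in> Mbase G"
      using z y by (simp_all add: Mprod_def)
    then have "proj3 i (fst x) = proj3 i (fst z)"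
      using y i proj3_mem_carrier[OF base(1)] by (simp add: x proj3_mult_Mbase Mprod_def)
    moreover have "x \<in> Mbase G"
      unfolding x using base by (rule subgroup.m_closed[OF Mbase_subgroup])
    ultimately show "x \<in> {x \<in> Mbase G. proj3 i (fst x) \<in> D}"
      using z(2) by simp
  qed
  show "{x \<in> Mbase G. proj3 i (fst x) \<in> D}
      \<subseteq> {z \<in> Mprod G {i}. proj3 i (fst z) \<in> D} <#>\<^bsub>wr3 G\<^esub> Mprod G ({..<3} - {i})"
  proof
    fix x assume "x \<in> {x \<in> Mbase G. proj3 i (fst x) \<in> D}"
    then have x: "x \<in> Mbase G" "proj3 i (fst x) \<in> D"
      by simp_all
    have "coord3 G i (proj3 i (fst x)) \<in> {z \<in> Mprod G {i}. proj3 i (fst z) \<in> D}"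
      using coord3_mem_Mprod[OF proj3_mem_carrier[OF x(1)]] x(2) i by simp
    moreover note coord3_inv_mult_mem_Mprod[OF x(1) i]
    moreover have "x = coord3 G i (proj3 i (fst x)) \<otimes>\<^bsub>wr3 G\<^esub>
        (coord3 G i (inv (proj3 i (fst x))) \<otimes>\<^bsub>wr3 G\<^esub> x)"
      using coord3_cancel[OF proj3_mem_carrier[OF x(1)] subsetD[OF Mbase_subset_carrier x(1)]] by simp
    ultimately show "x \<in> {z \<in> Mprod G {i}. proj3 i (fst z) \<in> D} <#>\<^bsub>wr3 G\<^esub> Mprod G ({..<3} - {i})"
      unfolding set_mult_def by blast
  qed
qed

end

context simple_group
begin

lemma Mbase_nontrivial: "Mbase G \<noteq> {\<one>\<^bsub>wr3 G\<^esub>}"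
proof -
  obtain a where "a \<in> carrier G" "a \<noteq> \<one>"
    using simple_not_triv one_closed by blast
  then have "((a, \<one>, \<one>), 0) \<in> Mbase G" "((a, \<one>, \<one>), 0) \<noteq> \<one>\<^bsub>wr3 G\<^esub>"
    by auto
  then show ?thesis
    by blast
qed

lemma proj3_image_normal:
  assumes N: "N \<lhd> base_group G" and k: "k < 3"
  shows "(\<lambda>x. proj3 k (fst x)) ` N \<lhd> G"
  using normal.surj_hom_normal_subgroup[OF N proj3_hom] proj3_image_Mbase[OF k] by simp

lemma base_normal_subgroup_trivial:
  assumes N: "N \<lhd> base_group G" and N_sub: "N \<subseteq> emb3 (P \<times> Q \<times> R)"
    and proper: "P \<subset> carrier G" "Q \<subset> carrier G" "R \<subset> carrier G"
  shows "N = {\<one>\<^bsub>wr3 G\<^esub>}"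
proof -
  have "(\<lambda>x. proj3 k (fst x)) ` N = {\<one>}" if k: "k < 3" for k
  proof -
    have "(\<lambda>x. proj3 k (fst x)) ` N \<subseteq> proj3 k (P, Q, R)"
      using N_sub by (auto simp: proj3_def)
    moreover have "proj3 k (P, Q, R) \<subset> carrier G"
      using proper by (simp add: proj3_def)
    ultimately show ?thesis
      using no_real_normal_subgroup[OF proj3_image_normal[OF N k]] by blast
  qed
  moreover have "N \<subseteq> Mbase G"
    using normal_imp_subgroup[OF N] subgroup.subset by force
  ultimately have "N \<subseteq> Mprod G {}"
    unfolding Mprod_def by blast
  moreover have "\<one>\<^bsub>wr3 G\<^esub> \<in> N"
    using subgroup.one_closed[OF normal_imp_subgroup[OF N]] by simp
  ultimately show ?thesis
    unfolding Mprod_empty by blast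
qed

lemma Ktrip_normal_subgroup_trivial:
  assumes N: "N \<lhd> base_group G" and N_sub: "N \<subseteq> emb3 (Ktrip P Q R i)"
    and proper: "P \<subset> carrier G" "Q \<subset> carrier G" "R \<subset> carrier G"
  shows "N = {\<one>\<^bsub>wr3 G\<^esub>}"
proof -
  have "Ktrip P Q R i \<in> {P \<times> Q \<times> R, Q \<times> R \<times> P, R \<times> P \<times> Q}"
    by (simp add: Ktrip_def)
  then consider "Ktrip P Q R i = P \<times> Q \<times> R" | "Ktrip P Q R i = Q \<times> R \<times> P"
    | "Ktrip P Q R i = R \<times> P \<times> Q"
    by blast
  then show ?thesis
  proof cases
    case 1
    show ?thesis
      by (rule base_normal_subgroup_trivial[OF N _ proper(1,2,3)]) (use N_sub 1 in simp)
  next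
    case 2
    show ?thesis
      by (rule base_normal_subgroup_trivial[OF N _ proper(2,3,1)]) (use N_sub 2 in simp)
  next
    case 3
    show ?thesis
      by (rule base_normal_subgroup_trivial[OF N _ proper(3,1,2)]) (use N_sub 3 in simp)
  qed
qed

lemma base_normal_subgroup_meets_factor_imp_subset:
  assumes N: "N \<lhd> base_group G" and k: "k < 3" and meet: "N \<inter> Mprod G {k} \<noteq> {\<one>\<^bsub>wr3 G\<^esub>}"
  shows "Mprod G {k} \<subseteq> N"
proof -
  interpret B: group "base_group G"
    by (rule group_base_group)
  let ?\<pi> = "\<lambda>x. proj3 k (fst x)"
  have "?\<pi> ` (N \<inter> Mprod G {k}) \<noteq> {\<one>}"
  proof
    assume trivial: "?\<pi> ` (N \<inter> Mprod G {k}) = {\<one>}"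
    have "z = \<one>\<^bsub>wr3 G\<^esub>" if z: "z \<in> N \<inter> Mprod G {k}" for z
    proof -
      have "?\<pi> z = \<one>"
        using z trivial by blast
      then show ?thesis
        using Mprod_singleton_eq_coord3[of z k] z coord3_one[of k] by simp
    qed
    then show False
      using meet subgroup.one_closed[OF normal_imp_subgroup[OF N]] subgroup.one_closed[OF Mprod_subgroup]
      by auto
  qed
  moreover have "?\<pi> ` (N \<inter> Mprod G {k}) \<lhd> G"
    using proj3_image_normal[OF B.normal_subgroup_intersect[OF N Mprod_normal] k] .
  ultimately have image_full: "?\<pi> ` (N \<inter> Mprod G {k}) = carrier G"
    using no_real_normal_subgroup by blast
  show ?thesis
  proof
    fix w assume w: "w \<in> Mprod G {k}"
    then have "?\<pi> w \<in> ?\<pi> ` (N \<inter> Mprod G {k})"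
      using image_full by (simp add: Mprod_def proj3_mem_carrier)
    then obtain v where v: "?\<pi> w = ?\<pi> v" "v \<in> N \<inter> Mprod G {k}"
      by (rule imageE)
    then show "w \<in> N"
      using Mprod_singleton_eq_coord3[of v k] Mprod_singleton_eq_coord3[OF w] by auto
  qed
qed

lemma base_commutator:
  assumes x: "x \<in> Mbase G" and z: "z \<in> Mprod G {k}"
  defines "c \<equiv> x \<otimes>\<^bsub>base_group G\<^esub> (z \<otimes>\<^bsub>base_group G\<^esub> inv\<^bsub>base_group G\<^esub> x
    \<otimes>\<^bsub>base_group G\<^esub> inv\<^bsub>base_group G\<^esub> z)"
  shows "c \<in> Mprod G {k}"
    and "proj3 k (fst c) = proj3 k (fst x) \<otimes> proj3 k (fst z) \<otimes> inv proj3 k (fst x) \<otimes> inv proj3 k (fst z)"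
proof -
  interpret B: group "base_group G"
    by (rule group_base_group)
  interpret proj: group_hom "base_group G" G "\<lambda>x. proj3 k (fst x)"
    by (rule proj3_hom)
  have x_B: "x \<in> carrier (base_group G)" and z_B: "z \<in> carrier (base_group G)"
    using x z by (simp_all add: Mprod_def)
  have "c = x \<otimes>\<^bsub>base_group G\<^esub> z \<otimes>\<^bsub>base_group G\<^esub> inv\<^bsub>base_group G\<^esub> x
      \<otimes>\<^bsub>base_group G\<^esub> inv\<^bsub>base_group G\<^esub> z"
    unfolding c_def using x_B z_B by (simp only: B.m_assoc B.m_closed B.inv_closed)
  then show "c \<in> Mprod G {k}"
    using Mprod_normal x_B z z_B
    by (metis normal.inv_op_closed2 normal_imp_subgroup subgroup.m_closed subgroup.m_inv_closed)
  show "proj3 k (fst c) = proj3 k (fst x) \<otimes> proj3 k (fst z) \<otimes> inv proj3 k (fst x) \<otimes> inv proj3 k (fst z)"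
    unfolding c_def using x_B z_B
    by (simp only: proj.hom_mult proj.hom_inv B.m_closed B.inv_closed)
      (simp add: m_assoc proj.hom_closed[OF x_B] proj.hom_closed[OF z_B])
qed

lemma base_normal_subgroup_contains_factor:
  assumes nonab: "\<not> comm_group G" and N: "N \<lhd> base_group G"
    and x: "x \<in> N" and k: "k < 3" and nontrivial: "proj3 k (fst x) \<noteq> \<one>"
  shows "Mprod G {k} \<subseteq> N"
proof (rule base_normal_subgroup_meets_factor_imp_subset[OF N k])
  let ?\<pi> = "\<lambda>x. proj3 k (fst x)"
  have N_subgroup: "subgroup N (base_group G)"
    using N by (rule normal_imp_subgroup)
  have x_base: "x \<in> Mbase G"
    using N_subgroup x subgroup.mem_carrier by force
  have y: "?\<pi> x \<in> carrier G"
    using x_base by (rule proj3_mem_carrier)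
  obtain t where t: "t \<in> carrier G" "?\<pi> x \<otimes> t \<otimes> inv ?\<pi> x \<noteq> t"
    using exists_noncommuting[OF nonab y nontrivial] by blast
  define z where "z = coord3 G k t"
  have z: "z \<in> Mprod G {k}" "z \<in> Mbase G" "?\<pi> z = t"
    using coord3_mem_Mprod[OF t(1)] k by (auto simp: z_def Mprod_def)
  define c where "c = x \<otimes>\<^bsub>base_group G\<^esub> (z \<otimes>\<^bsub>base_group G\<^esub> inv\<^bsub>base_group G\<^esub> x
    \<otimes>\<^bsub>base_group G\<^esub> inv\<^bsub>base_group G\<^esub> z)"
  have "c \<in> N"
    unfolding c_def using z(2)
    by (intro subgroup.m_closed[OF N_subgroup] x normal.inv_op_closed2[OF N]
        subgroup.m_inv_closed[OF N_subgroup]) simp_all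
  moreover have "c \<in> Mprod G {k}"
    unfolding c_def by (rule base_commutator(1)[OF x_base z(1)])
  \<comment> \<open>nontrivial, because \<open>t\<close> does not commute with the \<open>k\<close>-th coordinate of \<open>x\<close>\<close>
  moreover have "c \<noteq> \<one>\<^bsub>wr3 G\<^esub>"
  proof
    assume "c = \<one>\<^bsub>wr3 G\<^esub>"
    then have "?\<pi> c = \<one>"
      by (simp add: proj3_def)
    then have "?\<pi> x \<otimes> t \<otimes> inv ?\<pi> x \<otimes> inv t = \<one>"
      unfolding c_def base_commutator(2)[OF x_base z(1)] z(3) .
    then have "inv (inv t) = ?\<pi> x \<otimes> t \<otimes> inv ?\<pi> x"
      using t(1) y by (intro inv_equality) auto
    with t show False
      by simp
  qed
  ultimately show "N \<inter> Mprod G {k} \<noteq> {\<one>\<^bsub>wr3 G\<^esub>}"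
    by blast
qed

lemma Mbase_minimal_normal:
  assumes nonab: "\<not> comm_group G"
  shows "minimal_normal (wr3 G) (Mbase G)"
  unfolding minimal_normal_def
proof (intro conjI allI impI Mbase_normal Mbase_nontrivial)
  interpret W: group "wr3 G"
    by (rule wr3_group)
  fix L assume "L \<lhd> wr3 G \<and> L \<subseteq> Mbase G"
  then have L: "L \<lhd> wr3 G" and L_base: "L \<subseteq> Mbase G"
    by auto
  show "L = {\<one>\<^bsub>wr3 G\<^esub>} \<or> L = Mbase G"
  proof (cases "L = {\<one>\<^bsub>wr3 G\<^esub>}")
    case False
    moreover have "\<one>\<^bsub>wr3 G\<^esub> \<in> L"
      using subgroup.one_closed[OF normal_imp_subgroup[OF L]] .
    ultimately obtain x where x: "x \<in> L" "x \<noteq> \<one>\<^bsub>wr3 G\<^esub>"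
      by blast
    have "\<exists>k<3. proj3 k (fst x) \<noteq> \<one>"
    proof (rule ccontr)
      assume "\<not> (\<exists>k<3. proj3 k (fst x) \<noteq> \<one>)"
      then have "x = \<one>\<^bsub>wr3 G\<^esub>"
        using x L_base by (intro Mbase_eqI) (auto simp: proj3_def)
      with x(2) show False ..
    qed
    then obtain k where k: "k < 3" "proj3 k (fst x) \<noteq> \<one>"
      by blast
    have L_B: "L \<lhd> base_group G"
      by (rule W.normal_restrict_supergroup[OF Mbase_subgroup L L_base])
    have factors: "Mprod G {j} \<subseteq> L" if "j < 3" for j
      using normal_Mbase_nontrivial_coordinate[OF L L_base x(1) k that]
        base_normal_subgroup_contains_factor[OF nonab L_B _ that] by blast
    have "generate (wr3 G) (\<Union>j\<in>{..<3}. Mprod G {j}) \<subseteq> L"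
      by (rule W.generate_subgroup_incl[OF _ normal_imp_subgroup[OF L]]) (use factors in blast)
    then show ?thesis
      using generate_Mprod[of "{..<3}"] Mprod_all L_base by auto
  qed simp
qed

end

section \<open>Cyclic triples of subgroups\<close>

lemma shift3_image_Times: "shift3 ` (P \<times> Q \<times> R) = Q \<times> R \<times> P"
  by (force simp: image_iff)

lemma Ktrip_Int: "Ktrip P Q R 0 \<inter> Ktrip P Q R 1 \<inter> Ktrip P Q R 2 = (P \<inter> Q \<inter> R) \<times> (P \<inter> Q \<inter> R) \<times> (P \<inter> Q \<inter> R)"
  by (auto simp: Ktrip_def)

lemma Ktrip_complement:
  assumes "i < 3"
  shows "(\<Inter>j\<in>{..<3} - {i}. Ktrip P Q R j) = Ktrip (Q \<inter> R) (R \<inter> P) (P \<inter> Q) i"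
proof -
  have "{..<3::nat} - {0} = {1, 2}" "{..<3::nat} - {1} = {0, 2}" "{..<3::nat} - {2} = {0, 1}"
    by auto
  with assms show ?thesis
    by (elim less3_cases; simp only:; auto simp: Ktrip_def)
qed

lemma emb3_INT: "S \<noteq> {} \<Longrightarrow> (\<Inter>j\<in>S. emb3 (f j)) = emb3 (\<Inter>j\<in>S. f j)"
  by (auto simp: emb3_def)

lemma Ktrip_shift3_funpow:
  assumes j: "j < 3"
  shows "(shift3 ^^ i) ` Ktrip P Q R j = Ktrip P Q R ((j + i) mod 3)"
proof (induction i)
  case 0
  show ?case
    using j by simp
next
  case (Suc i)
  have shift: "shift3 ` Ktrip P Q R k = Ktrip P Q R ((k + 1) mod 3)" if "k < 3" for k
    using that by (elim less3_cases) (simp_all add: Ktrip_def shift3_image_Times)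
  have "(shift3 ^^ Suc i) ` Ktrip P Q R j = shift3 ` (shift3 ^^ i) ` Ktrip P Q R j"
    by (simp add: image_comp)
  also have "\<dots> = Ktrip P Q R (((j + i) mod 3 + 1) mod 3)"
    by (simp only: Suc.IH shift mod_less_divisor zero_less_numeral)
  also have "((j + i) mod 3 + 1) mod 3 = (j + Suc i) mod 3"
    by (simp add: mod_Suc_eq)
  finally show ?case .
qed

lemma rotate_image_lessThan_3: "(\<lambda>j. (j + i) mod 3) ` {..<3} = {..<(3::nat)}"
proof
  show "{..<3} \<subseteq> (\<lambda>j. (j + i) mod 3) ` {..<3}"
  proof
    fix k :: nat assume "k \<in> {..<3}"
    then have "k = (k + 3 * i) mod 3"
      by simp
    also have "\<dots> = ((k + 2 * i) mod 3 + i) mod 3"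
      by (simp add: mod_add_left_eq add.assoc)
    finally show "k \<in> (\<lambda>j. (j + i) mod 3) ` {..<3}"
      by (rule image_eqI) simp
  qed
qed auto

lemma proj3_image_Times: "P \<noteq> {} \<Longrightarrow> Q \<noteq> {} \<Longrightarrow> R \<noteq> {} \<Longrightarrow> proj3 k ` (P \<times> Q \<times> R) = proj3 k (P, Q, R)"
  by (force simp: proj3_def)

lemma Ltrip_eq_Ktrip:
  "i < 3 \<Longrightarrow> Ltrip T D i = Ktrip D (carrier T) (carrier T) (Transposition.transpose 1 2 i)"
  by (elim less3_cases) (simp_all add: Ltrip_def Ktrip_def)

lemma emb3_Ltrip:
  "i < 3 \<Longrightarrow> D \<subseteq> carrier T \<Longrightarrow> emb3 (Ltrip T D i) = {x \<in> Mbase T. proj3 i (fst x) \<in> D}"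
  by (elim less3_cases) (auto simp: Ltrip_def emb3_def Mbase_def proj3_def)

lemma Fset_Ktrip:
  assumes nonempty: "A \<noteq> {}" "B \<noteq> {}" "C \<noteq> {}"
    and proper: "A \<noteq> carrier T" "B \<noteq> carrier T" "C \<noteq> carrier T" and i: "i < 3"
  shows "Fset T (Ktrip A B C) 3 i = {A, B, C}"
proof -
  let ?F = "\<lambda>j. proj3 i ` Ktrip A B C j"
  have F: "{?F 0, ?F 1, ?F 2} = {A, B, C}"
    using i nonempty by (elim less3_cases) (auto simp: Ktrip_def proj3_image_Times)
  then have "?F j \<noteq> carrier T" if "j < 3" for j
    using that proper by (elim less3_cases) auto
  then have "{?F j | j. j < 3 \<and> ?F j \<noteq> carrier T} = {?F 0, ?F 1, ?F 2}"
    by (auto elim!: less3_cases)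
  then show ?thesis
    unfolding Fset_def F .
qed

context group
begin

lemma emb3_subgroup:
  assumes "subgroup P G" "subgroup Q G" "subgroup R G"
  shows "subgroup (emb3 (P \<times> Q \<times> R)) (wr3 G)"
proof (rule group.subgroupI[OF wr3_group])
  show "emb3 (P \<times> Q \<times> R) \<subseteq> carrier (wr3 G)" "emb3 (P \<times> Q \<times> R) \<noteq> {}"
    using assms by (auto simp: emb3_def dest: subgroup.mem_carrier intro!: subgroup.one_closed)
  fix x y assume "x \<in> emb3 (P \<times> Q \<times> R)" "y \<in> emb3 (P \<times> Q \<times> R)"
  then show "inv\<^bsub>wr3 G\<^esub> x \<in> emb3 (P \<times> Q \<times> R)" "x \<otimes>\<^bsub>wr3 G\<^esub> y \<in> emb3 (P \<times> Q \<times> R)"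
    using assms by (auto simp: emb3_def subgroup.mem_carrier subgroup.m_inv_closed subgroup.m_closed)
qed

lemma Ktrip_subgroup:
  assumes "subgroup P G" "subgroup Q G" "subgroup R G"
  shows "subgroup (emb3 (Ktrip P Q R i)) (wr3 G)"
  using assms by (simp add: Ktrip_def emb3_subgroup)

lemma emb3_set_mult:
  "emb3 (P \<times> Q \<times> R) <#>\<^bsub>wr3 G\<^esub> emb3 (P' \<times> Q' \<times> R') = emb3 ((P <#> P') \<times> (Q <#> Q') \<times> (R <#> R'))"
  by (auto simp: emb3_def set_mult_def image_iff; blast)

lemma emb3_Ktrip_factorisation:
  assumes "P <#> P' = carrier G" "Q <#> Q' = carrier G" "R <#> R' = carrier G"
    and "P' \<subseteq> carrier G" "Q' \<subseteq> carrier G" "R' \<subseteq> carrier G"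
  shows "emb3 (Ktrip P Q R i) <#>\<^bsub>wr3 G\<^esub> (Mbase G \<inter> emb3 (Ktrip P' Q' R' i)) = Mbase G"
proof -
  have "Mbase G \<inter> emb3 (Ktrip P' Q' R' i) = emb3 (Ktrip P' Q' R' i)"
    using assms(4-6) by (auto simp: Mbase_def emb3_def Ktrip_def)
  then show ?thesis
    using assms(1-3) by (simp add: emb3_set_mult Mbase_def Ktrip_def)
qed

lemma conj_set_rotation_emb3:
  assumes S: "S \<subseteq> carrier G \<times> carrier G \<times> carrier G" and i: "i < 3"
  shows "conj_set (wr3 G) ((\<one>, \<one>, \<one>), i) (emb3 S) = emb3 ((shift3 ^^ i) ` S)"
  unfolding group.conj_set_eq_image[OF wr3_group] emb3_def image_image
  using wr3_conj_rotation[OF _ i] S by (intro image_cong) auto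

lemma Hsub_elemE:
  assumes "g \<in> Hsub G P Q R"
  obtains d i where "g = (d, 0) \<otimes>\<^bsub>wr3 G\<^esub> ((\<one>, \<one>, \<one>), i)" "d \<in> Ktrip P Q R 0 \<inter> Ktrip P Q R 1 \<inter> Ktrip P Q R 2" "i < 3"
  using assms unfolding Hsub_def set_mult_def emb3_def C3_def by blast

lemma Hsub_eq:
  assumes "subgroup P G" "subgroup Q G" "subgroup R G"
  shows "Hsub G P Q R = ((P \<inter> Q \<inter> R) \<times> (P \<inter> Q \<inter> R) \<times> (P \<inter> Q \<inter> R)) \<times> {0, 1, 2}"
    (is "_ = (?D \<times> ?D \<times> ?D) \<times> _")
proof
  have D_carrier: "?D \<subseteq> carrier G"
    using assms(1) subgroup.subset by blast
  show "Hsub G P Q R \<subseteq> (?D \<times> ?D \<times> ?D) \<times> {0, 1, 2}"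
  proof
    fix g assume "g \<in> Hsub G P Q R"
    then obtain d i where "g = (d, 0) \<otimes>\<^bsub>wr3 G\<^esub> ((\<one>, \<one>, \<one>), i)"
      "d \<in> ?D \<times> ?D \<times> ?D" "i < 3"
      by (rule Hsub_elemE[unfolded Ktrip_Int])
    then show "g \<in> (?D \<times> ?D \<times> ?D) \<times> {0, 1, 2}"
      using D_carrier by (cases d) (auto elim: less3_cases)
  qed
  show "(?D \<times> ?D \<times> ?D) \<times> {0, 1, 2} \<subseteq> Hsub G P Q R"
  proof
    fix g assume "g \<in> (?D \<times> ?D \<times> ?D) \<times> {0::nat, 1, 2}"
    then obtain d i where g: "g = (d, i)" "d \<in> ?D \<times> ?D \<times> ?D" "i < 3"
      by auto
    then have "g = (d, 0) \<otimes>\<^bsub>wr3 G\<^esub> ((\<one>, \<one>, \<one>), i)"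
      using D_carrier by (cases d) auto
    moreover have "(d, 0) \<in> emb3 (?D \<times> ?D \<times> ?D)" "((\<one>, \<one>, \<one>), i) \<in> C3 G"
      using g by (auto simp: emb3_def C3_def)
    ultimately show "g \<in> Hsub G P Q R"
      unfolding Hsub_def Ktrip_Int set_mult_def by blast
  qed
qed

lemma Hsub_subgroup:
  assumes "subgroup P G" "subgroup Q G" "subgroup R G"
  shows "subgroup (Hsub G P Q R) (wr3 G)"
proof -
  define D where "D = P \<inter> Q \<inter> R"
  have D: "subgroup D G"
    unfolding D_def using assms by (intro subgroups_Inter_pair)
  show ?thesis
    unfolding Hsub_eq[OF assms] D_def[symmetric]
  proof (rule group.subgroupI[OF wr3_group])
    show "(D \<times> D \<times> D) \<times> {0, 1, 2} \<subseteq> carrier (wr3 G)"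
      using subgroup.subset[OF D] by auto
    show "(D \<times> D \<times> D) \<times> {0, 1, 2} \<noteq> {}"
      using subgroup.one_closed[OF D] by blast
    fix x y assume "x \<in> (D \<times> D \<times> D) \<times> {0::nat, 1, 2}" "y \<in> (D \<times> D \<times> D) \<times> {0::nat, 1, 2}"
    then show "inv\<^bsub>wr3 G\<^esub> x \<in> (D \<times> D \<times> D) \<times> {0, 1, 2}"
      "x \<otimes>\<^bsub>wr3 G\<^esub> y \<in> (D \<times> D \<times> D) \<times> {0, 1, 2}"
      using subgroup.mem_carrier[OF D]
      by (auto simp: subgroup.m_closed[OF D] subgroup.m_inv_closed[OF D])
  qed
qed

lemma Mbase_Int_Hsub:
  assumes "subgroup P G" "subgroup Q G" "subgroup R G"
  shows "Mbase G \<inter> Hsub G P Q R = emb3 ((P \<inter> Q \<inter> R) \<times> (P \<inter> Q \<inter> R) \<times> (P \<inter> Q \<inter> R))"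
  using assms by (auto simp: Hsub_eq emb3_def Mbase_def dest: subgroup.mem_carrier)

lemma carrier_wr3_subset_Mbase_Hsub:
  assumes "subgroup P G" "subgroup Q G" "subgroup R G"
  shows "carrier (wr3 G) \<subseteq> Mbase G <#>\<^bsub>wr3 G\<^esub> Hsub G P Q R"
proof
  fix x assume "x \<in> carrier (wr3 G)"
  then obtain m i where x: "x = (m, i)" "m \<in> carrier G \<times> carrier G \<times> carrier G" "i < 3"
    by (elim wr3_elem_cases) auto
  then have "x = (m, 0) \<otimes>\<^bsub>wr3 G\<^esub> ((\<one>, \<one>, \<one>), i)"
    by (cases m) auto
  moreover have "(m, 0) \<in> Mbase G" "((\<one>, \<one>, \<one>), i) \<in> Hsub G P Q R"
    using x assms by (auto simp: Mbase_def emb3_def Hsub_eq subgroup.one_closed)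
  ultimately show "x \<in> Mbase G <#>\<^bsub>wr3 G\<^esub> Hsub G P Q R"
    unfolding set_mult_def by blast
qed

lemma C3_normalises_cube:
  assumes D: "subgroup D G" and c: "c \<in> C3 G"
  shows "conj_set (wr3 G) c (emb3 (D \<times> D \<times> D)) = emb3 (D \<times> D \<times> D)"
proof -
  obtain i where c_eq: "c = ((\<one>, \<one>, \<one>), i)" and i: "i < 3"
    using c unfolding C3_def by blast
  have "D \<times> D \<times> D \<subseteq> carrier G \<times> carrier G \<times> carrier G"
    using subgroup.subset[OF D] by blast
  then show ?thesis
    unfolding c_eq using Ktrip_shift3_funpow[of 0 i D D D]
    by (simp add: conj_set_rotation_emb3[OF _ i] Ktrip_def)
qed

lemma conj_set_Ktrip:
  assumes P: "subgroup P G" and Q: "subgroup Q G" and R: "subgroup R G"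
    and d: "d \<in> Ktrip P Q R 0 \<inter> Ktrip P Q R 1 \<inter> Ktrip P Q R 2" and i: "i < 3" and j: "j < 3"
  shows "conj_set (wr3 G) ((d, 0) \<otimes>\<^bsub>wr3 G\<^esub> ((\<one>, \<one>, \<one>), i)) (emb3 (Ktrip P Q R j))
    = emb3 (Ktrip P Q R ((j + i) mod 3))"
proof -
  interpret W: group "wr3 G"
    by (rule wr3_group)
  have Ktrip_carrier: "Ktrip P Q R k \<subseteq> carrier G \<times> carrier G \<times> carrier G" for k
    using P Q R by (auto simp: Ktrip_def dest: subgroup.mem_carrier)
  have d_mem: "(d, 0) \<in> emb3 (Ktrip P Q R k)" if "k < 3" for k
    using d that by (elim less3_cases) auto
  have "(d, 0) \<in> carrier (wr3 G)" "((\<one>, \<one>, \<one>), i) \<in> carrier (wr3 G)"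
    using d_mem[of 0] i Ktrip_carrier[of 0] by auto
  moreover have "emb3 (Ktrip P Q R j) \<subseteq> carrier (wr3 G)"
    using Ktrip_carrier by (auto simp: emb3_def)
  ultimately have "conj_set (wr3 G) ((d, 0) \<otimes>\<^bsub>wr3 G\<^esub> ((\<one>, \<one>, \<one>), i)) (emb3 (Ktrip P Q R j))
      = conj_set (wr3 G) (d, 0) (conj_set (wr3 G) ((\<one>, \<one>, \<one>), i) (emb3 (Ktrip P Q R j)))"
    by (rule W.conj_set_mult)
  also have "\<dots> = conj_set (wr3 G) (d, 0) (emb3 (Ktrip P Q R ((j + i) mod 3)))"
    by (simp only: conj_set_rotation_emb3[OF Ktrip_carrier i] Ktrip_shift3_funpow[OF j])
  also have "\<dots> = emb3 (Ktrip P Q R ((j + i) mod 3))"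
    by (rule W.conj_set_subgroup_self[OF Ktrip_subgroup[OF P Q R] d_mem]) simp
  finally show ?thesis .
qed

lemma Hsub_permutes_Ktrip:
  assumes P: "subgroup P G" and Q: "subgroup Q G" and R: "subgroup R G" and g: "g \<in> Hsub G P Q R"
  shows "(\<lambda>Z. conj_set (wr3 G) g Z) ` (\<lambda>j. emb3 (Ktrip P Q R j)) ` {..<3}
    = (\<lambda>j. emb3 (Ktrip P Q R j)) ` {..<3}"
proof -
  obtain d i where g_eq: "g = (d, 0) \<otimes>\<^bsub>wr3 G\<^esub> ((\<one>, \<one>, \<one>), i)"
    and d: "d \<in> Ktrip P Q R 0 \<inter> Ktrip P Q R 1 \<inter> Ktrip P Q R 2" and i: "i < 3"
    using g by (rule Hsub_elemE)
  have "(\<lambda>Z. conj_set (wr3 G) g Z) ` (\<lambda>j. emb3 (Ktrip P Q R j)) ` {..<3}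
      = (\<lambda>j. emb3 (Ktrip P Q R j)) ` (\<lambda>j. (j + i) mod 3) ` {..<3}"
    unfolding image_image g_eq by (intro image_cong refl conj_set_Ktrip[OF P Q R d i]) simp
  then show ?thesis
    by (simp only: rotate_image_lessThan_3)
qed

lemma cartesian_system_Ktrip:
  assumes P: "subgroup P G" and Q: "subgroup Q G" and R: "subgroup R G"
    and fP: "P <#> (Q \<inter> R) = carrier G" and fQ: "Q <#> (R \<inter> P) = carrier G"
    and fR: "R <#> (P \<inter> Q) = carrier G"
  shows "cartesian_system (wr3 G) (Mbase G) (stab (wr3 G) (Hsub G P Q R))
    (Mbase G \<inter> stab (wr3 G) (Hsub G P Q R)) 3 (\<lambda>i. emb3 (Ktrip P Q R i))"
proof -
  have stab: "stab (wr3 G) (Hsub G P Q R) = Hsub G P Q R"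
    by (rule group.stab_subgroup[OF wr3_group Hsub_subgroup[OF P Q R]])
  have carrier: "P \<subseteq> carrier G" "Q \<subseteq> carrier G" "R \<subseteq> carrier G"
    using P Q R subgroup.subset by blast+
  show ?thesis
    unfolding cartesian_system_def stab
  proof (intro conjI allI impI ballI)
    fix i :: nat
    show "subgroup (emb3 (Ktrip P Q R i)) (wr3 G)"
      by (rule Ktrip_subgroup[OF P Q R])
    show "emb3 (Ktrip P Q R i) \<subseteq> Mbase G"
      using carrier by (auto simp: Ktrip_def emb3_def Mbase_def)
  next
    fix g assume "g \<in> Hsub G P Q R"
    then show "(\<lambda>Z. conj_set (wr3 G) g Z) ` (\<lambda>i. emb3 (Ktrip P Q R i)) ` {..<3}
        = (\<lambda>i. emb3 (Ktrip P Q R i)) ` {..<3}"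
      by (rule Hsub_permutes_Ktrip[OF P Q R])
  next
    show "Mbase G \<inter> (\<Inter>i\<in>{..<3}. emb3 (Ktrip P Q R i)) = Mbase G \<inter> Hsub G P Q R"
      unfolding Mbase_Int_Hsub[OF P Q R] using carrier
      by (auto simp: Ktrip_def emb3_def Mbase_def lessThan_nat_numeral)
  next
    fix i :: nat assume i: "i < 3"
    have "(i + 1) mod 3 \<in> {..<3} - {i}"
      using i by (elim less3_cases) auto
    then have nonempty: "{..<3} - {i} \<noteq> {}"
      by blast
    show "emb3 (Ktrip P Q R i) <#>\<^bsub>wr3 G\<^esub> (Mbase G \<inter> (\<Inter>j\<in>{..<3} - {i}. emb3 (Ktrip P Q R j)))
        = Mbase G"
      unfolding emb3_INT[OF nonempty] Ktrip_complement[OF i]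
      by (rule emb3_Ktrip_factorisation[OF fP fQ fR]) (use carrier in auto)
  qed
qed

lemma cartesian_system_Ltrip:
  assumes A: "subgroup A G" and B: "subgroup B G" and C: "subgroup C G"
  shows "cartesian_system (wr3 G) (Mbase G) (stab (wr3 G) (Hsub G A B C))
    (Mbase G \<inter> stab (wr3 G) (Hsub G A B C)) 3 (\<lambda>i. emb3 (Ltrip G (A \<inter> B \<inter> C) i))"
proof -
  let ?D = "A \<inter> B \<inter> C"
  have D: "subgroup ?D G"
    using A B C by (intro subgroups_Inter_pair)
  have Hsub_eq: "Hsub G ?D (carrier G) (carrier G) = Hsub G A B C"
    unfolding Hsub_def Ktrip_Int using subgroup.subset[OF D] by (simp add: Int_absorb2)
  have "cartesian_system (wr3 G) (Mbase G) (stab (wr3 G) (Hsub G ?D (carrier G) (carrier G)))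
      (Mbase G \<inter> stab (wr3 G) (Hsub G ?D (carrier G) (carrier G))) 3
      (\<lambda>i. emb3 (Ktrip ?D (carrier G) (carrier G) i))"
    using subgroup.subset[OF D]
    by (intro cartesian_system_Ktrip D subgroup_self)
      (simp_all add: Int_absorb1 Int_absorb2 subgroup_set_mult_carrier[OF D] set_mult_carrier_idem[OF D])
  moreover have "bij_betw (Transposition.transpose (1::nat) 2) {..<3} {..<3}"
    by simp
  ultimately show ?thesis
    unfolding Hsub_eq by (rule cartesian_system_reindex[rotated 2]) (simp add: Ltrip_eq_Ktrip)
qed

lemma Mprod_Int_cube:
  assumes i: "i < 3" and one: "\<one> \<in> D"
  shows "Mprod G {i} \<inter> emb3 (D \<times> D \<times> D) = {z \<in> Mprod G {i}. proj3 i (fst z) \<in> D}"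
proof (intro equalityI subsetI)
  fix z assume "z \<in> Mprod G {i} \<inter> emb3 (D \<times> D \<times> D)"
  then show "z \<in> {z \<in> Mprod G {i}. proj3 i (fst z) \<in> D}"
    using i by (elim less3_cases) (auto simp: emb3_def)
next
  fix z assume z: "z \<in> {z \<in> Mprod G {i}. proj3 i (fst z) \<in> D}"
  then have "z = coord3 G i (proj3 i (fst z))"
    by (intro Mprod_singleton_eq_coord3) simp
  moreover have "coord3 G i (proj3 i (fst z)) \<in> emb3 (D \<times> D \<times> D)"
    using z one by (auto simp: coord3_def)
  ultimately show "z \<in> Mprod G {i} \<inter> emb3 (D \<times> D \<times> D)"
    using z by simp
qed

lemma M_normal_Ltrip:
  assumes D: "subgroup D G"
  shows "M_normal (wr3 G) (Mbase G) (emb3 (D \<times> D \<times> D)) 3 (\<lambda>i. emb3 (Ltrip G D i))"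
  unfolding M_normal_def
proof (intro exI[of _ "\<lambda>i. Mprod G {i}"] conjI allI impI)
  have others: "generate (wr3 G) (\<Union>j\<in>{..<3} - {i}. Mprod G {j}) = Mprod G ({..<3} - {i})" for i
    by (rule generate_Mprod) auto
  fix i :: nat assume i: "i < 3"
  show "Mprod G {i} \<lhd> base_group G"
    by (rule Mprod_normal)
  show "Mprod G {i} \<inter> generate (wr3 G) (\<Union>j\<in>{..<3} - {i}. Mprod G {j}) = {\<one>\<^bsub>wr3 G\<^esub>}"
    unfolding others Mprod_Int by (simp add: Mprod_empty)
  show "emb3 (Ltrip G D i)
      = (Mprod G {i} \<inter> emb3 (D \<times> D \<times> D)) <#>\<^bsub>wr3 G\<^esub> generate (wr3 G) (\<Union>j\<in>{..<3} - {i}. Mprod G {j})"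
    unfolding others Mprod_Int_cube[OF i subgroup.one_closed[OF D]] emb3_Ltrip[OF i subgroup.subset[OF D]]
    by (rule set_mult_Mprod_complement[OF i, symmetric])
next
  show "generate (wr3 G) (\<Union>i\<in>{..<3}. Mprod G {i}) = Mbase G"
    using generate_Mprod[of "{..<3}"] Mprod_all by simp
qed

end

context simple_group
begin

lemma not_M_normal_Ktrip:
  assumes P: "subgroup P G" and Q: "subgroup Q G" and R: "subgroup R G"
    and proper: "P \<noteq> carrier G" "Q \<noteq> carrier G" "R \<noteq> carrier G"
    and one: "\<one>\<^bsub>wr3 G\<^esub> \<in> Mw"
  shows "\<not> M_normal (wr3 G) (Mbase G) Mw 3 (\<lambda>i. emb3 (Ktrip P Q R i))"
proof
  interpret W: group "wr3 G"
    by (rule wr3_group)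
  assume "M_normal (wr3 G) (Mbase G) Mw 3 (\<lambda>i. emb3 (Ktrip P Q R i))"
  then obtain Ms where normal: "\<And>i. i < 3 \<Longrightarrow> Ms i \<lhd> base_group G"
    and gen: "generate (wr3 G) (\<Union>i\<in>{..<3}. Ms i) = Mbase G"
    and sub: "\<And>i j. i < 3 \<Longrightarrow> j < 3 \<Longrightarrow> j \<noteq> i \<Longrightarrow> Ms j \<subseteq> emb3 (Ktrip P Q R i)"
    by (rule W.M_normal_imp_factors_subset[OF Mbase_subgroup one]) auto
  have psub: "P \<subset> carrier G" "Q \<subset> carrier G" "R \<subset> carrier G"
    using P Q R proper subgroup.subset by blast+
  have Ms_trivial: "Ms j = {\<one>\<^bsub>wr3 G\<^esub>}" if j: "j < 3" for j
  proof (rule Ktrip_normal_subgroup_trivial[OF normal[OF j] _ psub])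
    show "Ms j \<subseteq> emb3 (Ktrip P Q R ((j + 1) mod 3))"
      using j by (intro sub) (auto elim: less3_cases)
  qed
  have "Mbase G \<subseteq> {\<one>\<^bsub>wr3 G\<^esub>}"
    unfolding gen[symmetric]
    by (rule W.generate_subgroup_incl[OF _ W.triv_subgroup]) (use Ms_trivial in auto)
  then show False
    using Mbase_nontrivial subgroup.one_closed[OF Mbase_subgroup] by blast
qed

end

theorem mainTheorem12:
  fixes T :: "('a, 'b) monoid_scheme" and A B C :: "'a set"
  assumes simple: "simple_group T" and fin: "finite (carrier T)"
    and nonab: "\<not> comm_group T"
    and sA: "subgroup A T" and sB: "subgroup B T" and sC: "subgroup C T"
    and pA: "A \<noteq> carrier T" and pB: "B \<noteq> carrier T" and pC: "C \<noteq> carrier T"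
    and dAB: "A \<noteq> B" and dBC: "B \<noteq> C" and dAC: "A \<noteq> C"
    and fA: "A <#>\<^bsub>T\<^esub> (B \<inter> C) = carrier T"
    and fB: "B <#>\<^bsub>T\<^esub> (C \<inter> A) = carrier T"
    and fC: "C <#>\<^bsub>T\<^esub> (A \<inter> B) = carrier T"
  shows "Ktrip A B C 0 \<inter> Ktrip A B C 1 \<inter> Ktrip A B C 2
             = (A \<inter> B \<inter> C) \<times> (A \<inter> B \<inter> C) \<times> (A \<inter> B \<inter> C)
    \<and> (\<forall>c\<in>C3 T. (c <#\<^bsub>wr3 T\<^esub> emb3 (Ktrip A B C 0 \<inter> Ktrip A B C 1 \<inter> Ktrip A B C 2))
                     #>\<^bsub>wr3 T\<^esub> inv\<^bsub>wr3 T\<^esub> c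
                   = emb3 (Ktrip A B C 0 \<inter> Ktrip A B C 1 \<inter> Ktrip A B C 2))
    \<and> group (wr3 T) \<and> subgroup (Hsub T A B C) (wr3 T)
    \<and> transitive_on (wr3 T) (carrier (wr3 T)) (coset_space (wr3 T) (Hsub T A B C))
    \<and> minimal_normal (wr3 T) (Mbase T)
    \<and> transitive_on (wr3 T) (Mbase T) (coset_space (wr3 T) (Hsub T A B C))
    \<and> cartesian_system (wr3 T) (Mbase T) (stab (wr3 T) (Hsub T A B C))
         (Mbase T \<inter> stab (wr3 T) (Hsub T A B C)) 3 (\<lambda>i. emb3 (Ktrip A B C i))
    \<and> \<not> M_normal (wr3 T) (Mbase T) (Mbase T \<inter> stab (wr3 T) (Hsub T A B C)) 3
         (\<lambda>i. emb3 (Ktrip A B C i))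
    \<and> (\<forall>i<3. card (Fset T (Ktrip A B C) 3 i) = 3)
    \<and> cartesian_system (wr3 T) (Mbase T) (stab (wr3 T) (Hsub T A B C))
         (Mbase T \<inter> stab (wr3 T) (Hsub T A B C)) 3 (\<lambda>i. emb3 (Ltrip T (A \<inter> B \<inter> C) i))
    \<and> M_normal (wr3 T) (Mbase T) (Mbase T \<inter> stab (wr3 T) (Hsub T A B C)) 3
         (\<lambda>i. emb3 (Ltrip T (A \<inter> B \<inter> C) i))"
proof -
  interpret T: simple_group T
    by (rule simple)
  interpret W: group "wr3 T"
    by (rule T.wr3_group)
  let ?D = "A \<inter> B \<inter> C"
  have D: "subgroup ?D T"
    using sA sB sC by (intro T.subgroups_Inter_pair)
  have H: "subgroup (Hsub T A B C) (wr3 T)"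
    by (rule T.Hsub_subgroup[OF sA sB sC])
  have Mw: "Mbase T \<inter> stab (wr3 T) (Hsub T A B C) = emb3 (?D \<times> ?D \<times> ?D)"
    using W.stab_subgroup[OF H] T.Mbase_Int_Hsub[OF sA sB sC] by simp
  have transitive: "transitive_on (wr3 T) N (coset_space (wr3 T) (Hsub T A B C))"
    if "subgroup N (wr3 T)" "Mbase T \<subseteq> N" for N
    using T.carrier_wr3_subset_Mbase_Hsub[OF sA sB sC] mono_set_mult[OF that(2), of _ _ "wr3 T"]
    by (intro W.transitive_on_coset_space[OF that(1) H]) blast
  have Fset: "Fset T (Ktrip A B C) 3 i = {A, B, C}" if "i < 3" for i
    using Fset_Ktrip[OF _ _ _ pA pB pC that] subgroup.one_closed sA sB sC by blast
  have "\<one>\<^bsub>wr3 T\<^esub> \<in> Mbase T \<inter> stab (wr3 T) (Hsub T A B C)"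
    unfolding Mw using subgroup.one_closed[OF D] by simp
  then show ?thesis
    unfolding Ktrip_Int using T.C3_normalises_cube[OF D] Fset dAB dBC dAC
    by (intro conjI ballI allI impI W.is_group H transitive W.subgroup_self T.Mbase_subgroup
        T.Mbase_minimal_normal[OF nonab] T.cartesian_system_Ktrip[OF sA sB sC fA fB fC]
        T.not_M_normal_Ktrip[OF sA sB sC pA pB pC] T.cartesian_system_Ltrip[OF sA sB sC]
        T.M_normal_Ltrip[OF D, folded Mw] Mbase_subset_carrier order_refl)
      simp_all
qed

end
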